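(* Every fan in $\mathsf{c}\text{-}\mathsf{Fan}^{+-}_{\rm sc}(2)$ can be obtained from the fan $\Sigma(0,0;0,0)$, whose 2-dimensional cones are the four closed coordinate quadrants, by a finite sequence of subdivisions.
   Context: $\mathsf{c}\text{-}\mathsf{Fan}^{+-}_{\rm sc}(2)$ is the set of complete fans $\Sigma$ in $\mathbb{R}^2$ (cones strongly convex rational polyhedral) that are nonsingular (each 2-dimensional cone is generated by a $\mathbb{Z}$-basis of $\mathbb{Z}^2$), contain $\operatorname{cone}\{(1,0),(0,1)\}$, $\operatorname{cone}\{(-1,0),(0,-1)\}$ and $\operatorname{cone}\{(-1,0),(0,1)\}$, have every cone contained in a closed coordinate quadrant, and have every ray a face of exactly two 2-dimensional cones. Subdivision: for a 2-dimensional cone $\sigma=\operatorname{cone}\{u,v\}$ ($u,v$ primitive) of a nonsingular fan $\Sigma$, $D_\sigma(\Sigma)$ has rays $\Sigma_1\cup\{\mathbb{R}_{\ge0}(u+v)\}$ and 2-dimensional cones $(\Sigma_2\setminus\{\sigma\})\cup\{\operatorname{cone}\{u,u+v\},\operatorname{cone}\{v,u+v\}\}$. *)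

theory Defs
  imports "HOL-Analysis.Analysis"
begin

type_synonym lvec = "int \<times> int"
type_synonym cone2 = "(real \<times> real) set"

definition rv :: "lvec \<Rightarrow> real \<times> real" where
  "rv u = (real_of_int (fst u), real_of_int (snd u))"

definition primitive :: "lvec \<Rightarrow> bool" where
  "primitive u \<longleftrightarrow> u \<noteq> (0,0) \<and> gcd (fst u) (snd u) = 1"

definition cone_gen :: "lvec set \<Rightarrow> cone2" where
  "cone_gen S = {(\<Sum>v\<in>S. c v *\<^sub>R rv v) | c. \<forall>v\<in>S. c v \<ge> 0}"

definition scrp_cone :: "cone2 \<Rightarrow> bool" where
  "scrp_cone \<sigma> \<longleftrightarrow> (\<exists>S. finite S \<and> \<sigma> = cone_gen S) \<and> \<sigma> \<inter> uminus ` \<sigma> = {0}"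

definition is_fan :: "cone2 set \<Rightarrow> bool" where
  "is_fan \<Sigma> \<longleftrightarrow> finite \<Sigma> \<and> \<Sigma> \<noteq> {} \<and>
     (\<forall>\<sigma>\<in>\<Sigma>. scrp_cone \<sigma>) \<and>
     (\<forall>\<sigma>\<in>\<Sigma>. \<forall>\<tau>. \<tau> face_of \<sigma> \<and> \<tau> \<noteq> {} \<longrightarrow> \<tau> \<in> \<Sigma>) \<and>
     (\<forall>\<sigma>\<in>\<Sigma>. \<forall>\<tau>\<in>\<Sigma>. (\<sigma> \<inter> \<tau>) face_of \<sigma> \<and> (\<sigma> \<inter> \<tau>) face_of \<tau>)"

definition complete_fan :: "cone2 set \<Rightarrow> bool" where
  "complete_fan \<Sigma> \<longleftrightarrow> is_fan \<Sigma> \<and> \<Union>\<Sigma> = UNIV"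

definition cones_dim :: "cone2 set \<Rightarrow> int \<Rightarrow> cone2 set" where
  "cones_dim \<Sigma> k = {\<sigma>\<in>\<Sigma>. aff_dim \<sigma> = k}"

definition nonsingular :: "cone2 set \<Rightarrow> bool" where
  "nonsingular \<Sigma> \<longleftrightarrow> (\<forall>\<sigma>\<in>cones_dim \<Sigma> 2. \<exists>u v.
      \<bar>fst u * snd v - snd u * fst v\<bar> = 1 \<and> \<sigma> = cone_gen {u, v})"

definition in_closed_quadrant :: "cone2 \<Rightarrow> bool" where
  "in_closed_quadrant \<sigma> \<longleftrightarrow> (\<exists>s1 s2::real. s1 \<in> {1,-1} \<and> s2 \<in> {1,-1} \<and>
      \<sigma> \<subseteq> {x. s1 * fst x \<ge> 0 \<and> s2 * snd x \<ge> 0})"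

definition cFan_sc :: "cone2 set set" where
  "cFan_sc = {\<Sigma>. complete_fan \<Sigma> \<and> nonsingular \<Sigma> \<and>
      cone_gen {(1,0),(0,1)} \<in> \<Sigma> \<and>
      cone_gen {(-1,0),(0,-1)} \<in> \<Sigma> \<and>
      cone_gen {(-1,0),(0,1)} \<in> \<Sigma> \<and>
      (\<forall>\<sigma>\<in>\<Sigma>. in_closed_quadrant \<sigma>) \<and>
      (\<forall>\<rho>\<in>cones_dim \<Sigma> 1. card {\<sigma>\<in>cones_dim \<Sigma> 2. \<rho> face_of \<sigma>} = 2)}"

definition subdivision_step :: "cone2 set \<Rightarrow> cone2 set \<Rightarrow> bool" where
  "subdivision_step \<Sigma> \<Sigma>' \<longleftrightarrow> (\<exists>u v. primitive u \<and> primitive v \<and>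
      cone_gen {u, v} \<in> cones_dim \<Sigma> 2 \<and>
      \<Sigma>' = (\<Sigma> - {cone_gen {u, v}}) \<union>
            {cone_gen {u + v}, cone_gen {u, u + v}, cone_gen {v, u + v}})"

definition Sigma0000 :: "cone2 set" where
  "Sigma0000 = {cone_gen {},
     cone_gen {(1,0)}, cone_gen {(0,1)}, cone_gen {(-1,0)}, cone_gen {(0,-1)},
     cone_gen {(1,0),(0,1)}, cone_gen {(-1,0),(0,1)},
     cone_gen {(-1,0),(0,-1)}, cone_gen {(1,0),(0,-1)}}"

end

theory Submission
  imports Defs
begin

text \<open>A fan \<Sigma> of the class is determined by the set R of primitive generators of its rays in
  the closed fourth quadrant, ordered by angle from (1,0) to (0,-1): its cones are the three other
  quadrants with their faces, the rays of R, and the cones spanned by angularly adjacent vectors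
  of R, and nonsingularity makes adjacent vectors unimodular. If R has more than the two axis
  vectors, a vector of R of maximal l1-norm is the sum of its two neighbours, and deleting it
  gives a fan of the same kind whose subdivision at the cone of these neighbours is \<Sigma>.
  Induction on the size of R ends at R = {(1,0), (0,-1)}, the fan \<Sigma>(0,0;0,0).\<close>

section \<open>Planar cones spanned by two vectors\<close>

definition det2 :: "real \<times> real \<Rightarrow> real \<times> real \<Rightarrow> real" where
  "det2 p q = fst p * snd q - snd p * fst q"

lemma det2_simps:
  "det2 (x + y) q = det2 x q + det2 y q" "det2 p (x + y) = det2 p x + det2 p y"
  "det2 (c *\<^sub>R x) q = c * det2 x q" "det2 p (c *\<^sub>R x) = c * det2 p x"
  "det2 p p = 0" "det2 0 q = 0" "det2 p 0 = 0"
  by (auto simp: det2_def algebra_simps)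

lemma det2_commute: "det2 q p = - det2 p q"
  by (simp add: det2_def)

lemma det2_relation: "det2 a b *\<^sub>R p = det2 p b *\<^sub>R a + det2 a p *\<^sub>R b"
  by (cases p; cases a; cases b) (simp add: det2_def algebra_simps)

lemma cramer_decomp:
  assumes "det2 a b \<noteq> 0"
  shows "p = (det2 p b / det2 a b) *\<^sub>R a + (det2 a p / det2 a b) *\<^sub>R b"
proof -
  have "p = (1 / det2 a b) *\<^sub>R (det2 a b *\<^sub>R p)"
    using assms by simp
  then show ?thesis
    by (simp add: det2_relation[of a b p] scaleR_add_right)
qed

definition ray :: "real \<times> real \<Rightarrow> (real \<times> real) set" where
  "ray a = {c *\<^sub>R a | c. 0 \<le> c}"

definition sector :: "real \<times> real \<Rightarrow> real \<times> real \<Rightarrow> (real \<times> real) set" where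
  "sector a b = {\<alpha> *\<^sub>R a + \<beta> *\<^sub>R b | \<alpha> \<beta>. 0 \<le> \<alpha> \<and> 0 \<le> \<beta>}"

lemma sector_iff:
  assumes "det2 a b \<noteq> 0"
  shows "p \<in> sector a b \<longleftrightarrow> 0 \<le> det2 p b / det2 a b \<and> 0 \<le> det2 a p / det2 a b"
proof
  assume "p \<in> sector a b"
  then obtain \<alpha> \<beta> where "p = \<alpha> *\<^sub>R a + \<beta> *\<^sub>R b" "0 \<le> \<alpha>" "0 \<le> \<beta>"
    unfolding sector_def by blast
  then show "0 \<le> det2 p b / det2 a b \<and> 0 \<le> det2 a p / det2 a b"
    using assms by (simp add: det2_simps det2_commute[of b a])
next
  assume "0 \<le> det2 p b / det2 a b \<and> 0 \<le> det2 a p / det2 a b"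
  then show "p \<in> sector a b"
    using cramer_decomp[OF assms, of p] unfolding sector_def by blast
qed

lemma ray_iff:
  assumes "det2 a b \<noteq> 0"
  shows "p \<in> ray a \<longleftrightarrow> 0 \<le> det2 p b / det2 a b \<and> det2 a p = 0"
proof
  assume "p \<in> ray a"
  then show "0 \<le> det2 p b / det2 a b \<and> det2 a p = 0"
    using assms unfolding ray_def by (auto simp: det2_simps)
next
  assume "0 \<le> det2 p b / det2 a b \<and> det2 a p = 0"
  then show "p \<in> ray a"
    using cramer_decomp[OF assms, of p] unfolding ray_def by force
qed

lemma in_ray_self [simp]: "a \<in> ray a"
  unfolding ray_def by (metis (mono_tags, lifting) mem_Collect_eq scaleR_one zero_le_one)

lemma sector_corners: "a \<in> sector a b" "b \<in> sector a b" "a + b \<in> sector a b"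
  unfolding sector_def
  by (force intro: exI[of _ 1] exI[of _ 0])+

lemma convex_sector: "convex (sector a b)"
proof (rule convexI)
  fix x y and u v :: real
  assume "x \<in> sector a b" "y \<in> sector a b" "0 \<le> u" "0 \<le> v"
  then obtain \<alpha> \<beta> \<alpha>' \<beta>' where "x = \<alpha> *\<^sub>R a + \<beta> *\<^sub>R b" "y = \<alpha>' *\<^sub>R a + \<beta>' *\<^sub>R b"
    and "0 \<le> u * \<alpha> + v * \<alpha>'" "0 \<le> u * \<beta> + v * \<beta>'"
    unfolding sector_def by auto
  then have "u *\<^sub>R x + v *\<^sub>R y = (u * \<alpha> + v * \<alpha>') *\<^sub>R a + (u * \<beta> + v * \<beta>') *\<^sub>R b"
    and "0 \<le> u * \<alpha> + v * \<alpha>'" "0 \<le> u * \<beta> + v * \<beta>'"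
    by (simp_all add: algebra_simps)
  then show "u *\<^sub>R x + v *\<^sub>R y \<in> sector a b"
    unfolding sector_def by blast
qed

lemma sector_face_of_supporting_line:
  assumes "det2 a b \<noteq> 0" "0 \<le> s" "0 \<le> t"
  shows "{p \<in> sector a b. s * (det2 p b / det2 a b) + t * (det2 a p / det2 a b) = 0}
           face_of sector a b"
proof -
  define c where "c = ((s * snd b - t * snd a) / det2 a b, (t * fst a - s * fst b) / det2 a b)"
  have c: "c \<bullet> p = s * (det2 p b / det2 a b) + t * (det2 a p / det2 a b)" for p
    by (cases p) (simp add: c_def det2_def,
        simp add: field_simps add_divide_distrib[symmetric] diff_divide_distrib[symmetric])
  have "c \<bullet> p \<ge> 0" if "p \<in> sector a b" for p
    unfolding c using that assms
    by (intro add_nonneg_nonneg mult_nonneg_nonneg) (auto simp: sector_iff)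
  then have "sector a b \<inter> {p. c \<bullet> p = 0} face_of sector a b"
    by (intro face_of_Int_supporting_hyperplane_ge convex_sector)
  then show ?thesis
    by (simp add: c Int_def)
qed

lemma ray_face_of_sector:
  assumes "det2 a b \<noteq> 0"
  shows "ray a face_of sector a b"
proof -
  have "{p \<in> sector a b. 0 * (det2 p b / det2 a b) + 1 * (det2 a p / det2 a b) = 0} = ray a"
    using assms by (auto simp: sector_iff ray_iff)
  then show ?thesis
    using sector_face_of_supporting_line[OF assms, of 0 1] by simp
qed

lemma zero_face_of_sector:
  assumes "det2 a b \<noteq> 0"
  shows "{0} face_of sector a b"
proof -
  have "{p \<in> sector a b. 1 * (det2 p b / det2 a b) + 1 * (det2 a p / det2 a b) = 0} = {0}"
  proof (intro equalityI subsetI)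
    fix p
    assume "p \<in> {p \<in> sector a b. 1 * (det2 p b / det2 a b) + 1 * (det2 a p / det2 a b) = 0}"
    then have "0 \<le> det2 p b / det2 a b" "0 \<le> det2 a p / det2 a b"
      "det2 p b / det2 a b + det2 a p / det2 a b = 0"
      using assms by (auto simp: sector_iff)
    then have "det2 p b / det2 a b = 0" "det2 a p / det2 a b = 0"
      by linarith+
    then have "p = 0 *\<^sub>R a + 0 *\<^sub>R b"
      using cramer_decomp[OF assms, of p] by metis
    then show "p \<in> {0}"
      by simp
  qed (use assms in \<open>simp add: sector_iff det2_simps\<close>)
  then show ?thesis
    using sector_face_of_supporting_line[OF assms, of 1 1] by simp
qed

lemma face_of_extend:
  assumes "T face_of S" "x \<in> T" "y \<in> S" "0 < t" "x + t *\<^sub>R (x - y) \<in> S"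
  shows "y \<in> T"
proof (cases "y = x")
  case False
  define z where "z = x + t *\<^sub>R (x - y)"
  define u where "u = 1 / (1 + t)"
  have "0 < u" "u < 1"
    using assms(4) by (auto simp: u_def)
  moreover have "x = (1 - u) *\<^sub>R y + u *\<^sub>R z"
  proof -
    have "(1 + t) *\<^sub>R ((1 - u) *\<^sub>R y + u *\<^sub>R z) = (1 + t) *\<^sub>R x"
      using assms(4) by (simp add: u_def z_def field_simps)
    then show ?thesis
      using assms(4) by simp
  qed
  moreover have "z - y = (1 + t) *\<^sub>R (x - y)"
    by (simp add: z_def algebra_simps)
  then have "y \<noteq> z"
    using False assms(4) by auto
  ultimately have "x \<in> open_segment y z"
    unfolding in_segment by blast
  then show ?thesis
    using face_ofD[OF assms(1) _ assms(3)] assms(2,5) z_def by blast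
qed (use assms in simp)

lemma face_of_absorb:
  fixes A B :: "'a::real_vector \<Rightarrow> real"
  assumes lin: "linear A" "linear B" and T: "T face_of {p. 0 \<le> A p \<and> 0 \<le> B p}"
    and x: "x \<in> T" and y: "0 \<le> A y" "0 \<le> B y"
    and supp: "0 < A y \<Longrightarrow> 0 < A x" "0 < B y \<Longrightarrow> 0 < B x"
  shows "y \<in> T"
proof -
  define r where "r c d = (if 0 < d then c / d else 1)" for c d :: real
  define t where "t = min (r (A x) (A y)) (r (B x) (B y))"
  have x0: "0 \<le> A x" "0 \<le> B x"
    using x face_of_imp_subset[OF T] by auto
  have "0 < t"
    using supp by (auto simp: t_def r_def)
  have r: "r c d * d \<le> c" if "0 \<le> c" "0 \<le> d" for c d
    using that by (auto simp: r_def)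
  have "t * A y \<le> r (A x) (A y) * A y" "t * B y \<le> r (B x) (B y) * B y"
    using y by (auto simp: t_def intro: mult_right_mono)
  then have "t * A y \<le> A x" "t * B y \<le> B x"
    using r x0 y by (meson order_trans)+
  moreover have "0 \<le> t * A x" "0 \<le> t * B x"
    using x0 \<open>0 < t\<close> by simp_all
  ultimately have "x + t *\<^sub>R (x - y) \<in> {p. 0 \<le> A p \<and> 0 \<le> B p}"
    using x0 by (simp add: linear_add[OF lin(1)] linear_add[OF lin(2)] linear_scale[OF lin(1)]
        linear_scale[OF lin(2)] linear_diff[OF lin(1)] linear_diff[OF lin(2)] algebra_simps)
  then show ?thesis
    using face_of_extend[OF T x _ \<open>0 < t\<close>] y by blast
qed

lemma face_of_two_halfspaces:
  fixes A B :: "'a::real_vector \<Rightarrow> real"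
  assumes lin: "linear A" "linear B" and T: "T face_of {p. 0 \<le> A p \<and> 0 \<le> B p}" "T \<noteq> {}"
  shows "\<exists>sA sB. T = {p. 0 \<le> A p \<and> 0 \<le> B p \<and> (0 < A p \<longrightarrow> sA) \<and> (0 < B p \<longrightarrow> sB)}"
proof -
  define sA where "sA \<longleftrightarrow> (\<exists>x\<in>T. 0 < A x)"
  define sB where "sB \<longleftrightarrow> (\<exists>x\<in>T. 0 < B x)"
  obtain xa xb where xab: "xa \<in> T" "xb \<in> T" "sA \<Longrightarrow> 0 < A xa" "sB \<Longrightarrow> 0 < B xb"
    using T(2) unfolding sA_def sB_def by (metis ex_in_conv)
  define x where "x = (1/2) *\<^sub>R xa + (1/2) *\<^sub>R xb"
  have "x \<in> T"
    unfolding x_def using xab convexD[OF face_of_imp_convex[OF T(1)]] by simp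
  moreover have "sA \<Longrightarrow> 0 < A x" "sB \<Longrightarrow> 0 < B x"
    using xab face_of_imp_subset[OF T(1)]
    by (auto simp: x_def linear_add[OF lin(1)] linear_add[OF lin(2)] linear_scale[OF lin(1)]
        linear_scale[OF lin(2)])
  ultimately have "T = {p. 0 \<le> A p \<and> 0 \<le> B p \<and> (0 < A p \<longrightarrow> sA) \<and> (0 < B p \<longrightarrow> sB)}"
    using face_of_absorb[OF lin T(1)] face_of_imp_subset[OF T(1)] unfolding sA_def sB_def
    by blast
  then show ?thesis
    by blast
qed

lemma faces_of_sector:
  assumes D: "det2 a b \<noteq> 0" and T: "T face_of sector a b"
  shows "T = {} \<or> T = {0} \<or> T = ray a \<or> T = ray b \<or> T = sector a b"
proof (cases "T = {}")
  case False
  define A where "A p = det2 p b / det2 a b" for p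
  define B where "B p = det2 a p / det2 a b" for p
  have lin: "linear A" "linear B"
    by (intro linearI; simp add: A_def B_def det2_simps add_divide_distrib)+
  have sector: "sector a b = {p. 0 \<le> A p \<and> 0 \<le> B p}"
    using sector_iff[OF D] by (auto simp: A_def B_def)
  have ray_a: "ray a = {p. 0 \<le> A p \<and> B p = 0}"
    using ray_iff[OF D] D by (auto simp: A_def B_def)
  have ray_b: "ray b = {p. A p = 0 \<and> 0 \<le> B p}"
    using ray_iff[of b a] D by (auto simp: A_def B_def det2_commute[of b] det2_commute[of _ a])
  have zero: "{0} = {p. A p = 0 \<and> B p = 0}"
  proof (intro set_eqI iffI)
    fix p
    assume "p \<in> {p. A p = 0 \<and> B p = 0}"
    then have "det2 p b / det2 a b = 0" "det2 a p / det2 a b = 0"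
      unfolding A_def B_def by simp_all
    then have "p = 0 *\<^sub>R a + 0 *\<^sub>R b"
      using cramer_decomp[OF D, of p] by metis
    then show "p \<in> {0}"
      by simp
  qed (simp add: A_def B_def det2_simps)
  obtain sA sB where "T = {p. 0 \<le> A p \<and> 0 \<le> B p \<and> (0 < A p \<longrightarrow> sA) \<and> (0 < B p \<longrightarrow> sB)}"
    using face_of_two_halfspaces[OF lin T[unfolded sector] False] by blast
  then have "T = (if sA then if sB then sector a b else ray a else if sB then ray b else {0})"
    unfolding sector ray_a ray_b zero by auto
  then show ?thesis
    by (simp split: if_splits)
qed simp

lemma aff_dim_sector:
  assumes "det2 a b \<noteq> 0"
  shows "aff_dim (sector a b) = 2"
proof -
  define U where "U = {p. 0 < det2 p b * det2 a b \<and> 0 < det2 a p * det2 a b}"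
  have "open U"
    unfolding U_def det2_def
    by (intro open_Collect_conj open_Collect_less continuous_intros)
  moreover have "U \<subseteq> sector a b"
    using assms by (auto simp: U_def sector_iff zero_less_mult_iff zero_le_divide_iff)
  ultimately have "U \<subseteq> interior (sector a b)"
    by (simp add: interior_maximal)
  moreover have "a + b \<in> U"
    using assms by (auto simp: U_def det2_simps det2_commute[of b a] zero_less_mult_iff)
  ultimately show ?thesis
    using aff_dim_nonempty_interior[of "sector a b"] by auto
qed

section \<open>Cones generated by lattice vectors\<close>

lemma rv_add: "rv (u + v) = rv u + rv v"
  by (simp add: rv_def)

lemma rv_inject: "rv u = rv v \<longleftrightarrow> u = v"
  by (cases u, cases v) (simp add: rv_def)

definition ldet :: "lvec \<Rightarrow> lvec \<Rightarrow> int" where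
  "ldet u v = fst u * snd v - snd u * fst v"

lemma det2_rv: "det2 (rv u) (rv v) = of_int (ldet u v)"
  by (simp add: rv_def det2_def ldet_def)

lemma ldet_commute: "ldet v u = - ldet u v"
  by (simp add: ldet_def)

lemma ldet_add:
  "ldet u (v + w) = ldet u v + ldet u w" "ldet (u + v) w = ldet u w + ldet v w"
  "ldet u u = 0"
  by (simp_all add: ldet_def algebra_simps)

lemma primitive_rv_nonzero: "primitive u \<Longrightarrow> rv u \<noteq> 0"
  by (cases u) (auto simp: primitive_def rv_def zero_prod_def)

lemma primitive_if_unimodular:
  assumes "\<bar>ldet u v\<bar> = 1"
  shows "primitive u" "primitive v"
proof -
  have "gcd (fst u) (snd u) dvd ldet u v" "gcd (fst v) (snd v) dvd ldet u v"
    unfolding ldet_def by (intro dvd_diff dvd_mult dvd_mult2; simp)+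
  then have "gcd (fst u) (snd u) dvd 1" "gcd (fst v) (snd v) dvd 1"
    using assms by (metis dvd_abs_iff)+
  then have "gcd (fst u) (snd u) = 1" "gcd (fst v) (snd v) = 1"
    by simp_all
  moreover have "u \<noteq> (0, 0)" "v \<noteq> (0, 0)"
    using assms by (auto simp: ldet_def)
  ultimately show "primitive u" "primitive v"
    by (simp_all add: primitive_def)
qed

text \<open>Bezout coefficients for the coordinates of each vector show that the proportionality
  factor and its inverse are both integers.\<close>
lemma primitive_proportional_eq:
  assumes "primitive u" "primitive v" "rv u = c *\<^sub>R rv v" "0 < c"
  shows "u = v"
proof -
  obtain u1 u2 v1 v2 where uv: "u = (u1, u2)" "v = (v1, v2)"
    by (cases u, cases v) auto
  have coords: "real_of_int u1 = c * v1" "real_of_int u2 = c * v2"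
    using assms(3) uv by (simp_all add: rv_def)
  obtain s t where "s * v1 + t * v2 = 1"
    using bezout_int[of v1 v2] assms(2) uv by (auto simp: primitive_def)
  then have "c = c * (of_int s * of_int v1 + of_int t * of_int v2)"
    by (metis mult.right_neutral of_int_1 of_int_add of_int_mult)
  also have "\<dots> = of_int (s * u1 + t * u2)"
    using coords by (simp add: algebra_simps)
  finally have k: "c = of_int (s * u1 + t * u2)" .
  obtain s' t' where "s' * u1 + t' * u2 = 1"
    using bezout_int[of u1 u2] assms(1) uv by (auto simp: primitive_def)
  then have "1 = of_int s' * of_int u1 + of_int t' * (of_int u2 :: real)"
    by (metis of_int_1 of_int_add of_int_mult)
  also have "\<dots> = c * of_int (s' * v1 + t' * v2)"
    using coords by (simp add: algebra_simps)
  finally have "(s * u1 + t * u2) * (s' * v1 + t' * v2) = 1"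
    using k by (metis of_int_1 of_int_eq_iff of_int_mult)
  moreover have "0 < s * u1 + t * u2"
    using k assms(4) by linarith
  ultimately have "c = 1"
    using k pos_zmult_eq_1_iff by force
  then show ?thesis
    using assms(3) rv_inject by simp
qed

lemma cone_gen_empty: "cone_gen {} = {0}"
  by (simp add: cone_gen_def)

lemma cone_gen_singleton: "cone_gen {w} = ray (rv w)"
proof
  show "cone_gen {w} \<subseteq> ray (rv w)"
    unfolding cone_gen_def ray_def by auto
  show "ray (rv w) \<subseteq> cone_gen {w}"
  proof
    fix p
    assume "p \<in> ray (rv w)"
    then obtain c where "p = c *\<^sub>R rv w" "0 \<le> c"
      unfolding ray_def by blast
    then show "p \<in> cone_gen {w}"
      unfolding cone_gen_def by (intro CollectI exI[of _ "\<lambda>_. c"]) simp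
  qed
qed

lemma cone_gen_pair:
  assumes "u \<noteq> v"
  shows "cone_gen {u, v} = sector (rv u) (rv v)"
proof
  show "cone_gen {u, v} \<subseteq> sector (rv u) (rv v)"
    using assms unfolding cone_gen_def sector_def by auto
  show "sector (rv u) (rv v) \<subseteq> cone_gen {u, v}"
  proof
    fix p
    assume "p \<in> sector (rv u) (rv v)"
    then obtain \<alpha> \<beta> where "p = \<alpha> *\<^sub>R rv u + \<beta> *\<^sub>R rv v" "0 \<le> \<alpha>" "0 \<le> \<beta>"
      unfolding sector_def by blast
    then show "p \<in> cone_gen {u, v}"
      using assms unfolding cone_gen_def
      by (intro CollectI exI[of _ "\<lambda>w. if w = u then \<alpha> else \<beta>"]) auto
  qed
qed

lemma cone_gen_pair_sector:
  assumes "ldet u v \<noteq> 0"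
  shows "cone_gen {u, v} = sector (rv u) (rv v)" "det2 (rv u) (rv v) \<noteq> 0"
proof -
  have "u \<noteq> v"
    using assms by (auto simp: ldet_add)
  then show "cone_gen {u, v} = sector (rv u) (rv v)"
    by (rule cone_gen_pair)
  show "det2 (rv u) (rv v) \<noteq> 0"
    using assms by (simp add: det2_rv)
qed

lemma faces_of_cone_gen_pair:
  assumes "ldet u v \<noteq> 0" "T face_of cone_gen {u, v}"
  shows "T = {} \<or> T = cone_gen {} \<or> T = cone_gen {u} \<or> T = cone_gen {v} \<or> T = cone_gen {u, v}"
  using faces_of_sector[OF cone_gen_pair_sector(2)[OF assms(1)]] assms(2)
  by (simp add: cone_gen_pair_sector(1)[OF assms(1)] cone_gen_empty cone_gen_singleton)

lemma cone_gen_faces_of_cone_gen_pair: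
  assumes "ldet u v \<noteq> 0"
  shows "cone_gen {} face_of cone_gen {u, v}" "cone_gen {u} face_of cone_gen {u, v}"
    "cone_gen {v} face_of cone_gen {u, v}"
proof -
  have "ldet v u \<noteq> 0"
    using assms ldet_commute[of v u] by simp
  note uv = cone_gen_pair_sector[OF assms] and vu = cone_gen_pair_sector[OF this]
  show "cone_gen {} face_of cone_gen {u, v}"
    using zero_face_of_sector[OF uv(2)] uv(1) by (simp add: cone_gen_empty)
  show "cone_gen {u} face_of cone_gen {u, v}"
    using ray_face_of_sector[OF uv(2)] uv(1) by (simp add: cone_gen_singleton)
  show "cone_gen {v} face_of cone_gen {u, v}"
    using ray_face_of_sector[OF vu(2)] vu(1) by (simp add: cone_gen_singleton insert_commute)
qed

lemma aff_dim_cone_gen_pair: "ldet u v \<noteq> 0 \<Longrightarrow> aff_dim (cone_gen {u, v}) = 2"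
  using cone_gen_pair_sector aff_dim_sector by simp

lemma cone_gen_axes:
  assumes "s \<noteq> 0" "t \<noteq> 0"
  shows "cone_gen {(s, 0), (0, t)} = {p. 0 \<le> s * fst p \<and> 0 \<le> t * snd p}"
proof -
  have "ldet (s, 0) (0, t) \<noteq> 0"
    using assms by (simp add: ldet_def)
  note st = cone_gen_pair_sector[OF this]
  show ?thesis
    unfolding st(1) using st(2)
    by (auto simp: sector_iff rv_def det2_def zero_le_divide_iff zero_le_mult_iff)
qed

section \<open>The fourth quadrant ordered by angle\<close>

definition quad4 :: "(real \<times> real) set" where
  "quad4 = {p. 0 \<le> fst p \<and> snd p \<le> 0}"

text \<open>A nonzero p in quad4 is a positive multiple of (1 - t, - t) with t = angle4 p, so angle4
  increases clockwise from 0 on the positive x-axis to 1 on the negative y-axis.\<close>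
definition angle4 :: "real \<times> real \<Rightarrow> real" where
  "angle4 p = - snd p / (fst p - snd p)"

lemma quad4_norm_pos: "p \<in> quad4 \<Longrightarrow> p \<noteq> 0 \<Longrightarrow> 0 < fst p - snd p"
  by (cases p) (auto simp: quad4_def zero_prod_def)

lemma angle4_diff:
  assumes "p \<in> quad4" "p \<noteq> 0" "q \<in> quad4" "q \<noteq> 0"
  shows "angle4 p - angle4 q = det2 p q / ((fst p - snd p) * (fst q - snd q))"
  using quad4_norm_pos[OF assms(1,2)] quad4_norm_pos[OF assms(3,4)]
  by (simp add: angle4_def det2_def field_simps)

lemma angle4_less_iff:
  assumes "p \<in> quad4" "p \<noteq> 0" "q \<in> quad4" "q \<noteq> 0"
  shows "angle4 p < angle4 q \<longleftrightarrow> det2 p q < 0"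
  using angle4_diff[OF assms] quad4_norm_pos[OF assms(1,2)] quad4_norm_pos[OF assms(3,4)]
  by (smt (verit) divide_less_0_iff mult_pos_pos)

lemma angle4_le_iff:
  assumes "p \<in> quad4" "p \<noteq> 0" "q \<in> quad4" "q \<noteq> 0"
  shows "angle4 p \<le> angle4 q \<longleftrightarrow> det2 p q \<le> 0"
  using angle4_less_iff[OF assms(3,4,1,2)] det2_commute[of p q] by linarith

lemma angle4_bounds:
  assumes "p \<in> quad4" "p \<noteq> 0"
  shows "0 \<le> angle4 p" "angle4 p \<le> 1"
proof -
  have d: "0 < fst p - snd p"
    using quad4_norm_pos[OF assms] .
  then show "0 \<le> angle4 p"
    using assms(1) by (simp add: angle4_def quad4_def divide_nonpos_pos)
  show "angle4 p \<le> 1"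
    unfolding angle4_def using assms(1) by (subst pos_divide_le_eq[OF d]) (simp add: quad4_def)
qed

lemma angle4_scaleR: "0 < c \<Longrightarrow> angle4 (c *\<^sub>R p) = angle4 p"
  by (simp add: angle4_def flip: right_diff_distrib)

lemma angle4_eq_imp_proportional:
  assumes "p \<in> quad4" "p \<noteq> 0" "q \<in> quad4" "q \<noteq> 0" "angle4 p = angle4 q"
  shows "\<exists>c>0. p = c *\<^sub>R q"
proof -
  have np: "0 < fst p - snd p" and nq: "0 < fst q - snd q"
    using quad4_norm_pos assms by auto
  have "det2 p q = 0"
    using angle4_diff[OF assms(1-4)] assms(5) np nq by simp
  then have "p = ((fst p - snd p) / (fst q - snd q)) *\<^sub>R q"
    using nq by (simp add: prod_eq_iff det2_def field_simps)
  then show ?thesis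
    using np nq by (metis divide_pos_pos)
qed

lemma angle4_ray:
  assumes "a \<in> quad4" "p \<in> ray a" "p \<noteq> 0"
  shows "p \<in> quad4" "angle4 p = angle4 a"
proof -
  obtain c where c: "p = c *\<^sub>R a" "0 \<le> c"
    using assms(2) unfolding ray_def by blast
  with assms(3) have "0 < c"
    by auto
  then show "p \<in> quad4" "angle4 p = angle4 a"
    using c assms(1) by (auto simp: quad4_def mult_nonneg_nonpos angle4_scaleR)
qed

lemma sector_quad4_iff:
  assumes a: "a \<in> quad4" "a \<noteq> 0" and b: "b \<in> quad4" "b \<noteq> 0"
    and ab: "angle4 a < angle4 b"
  shows "p \<in> sector a b \<longleftrightarrow> p = 0 \<or> (p \<in> quad4 \<and> angle4 a \<le> angle4 p \<and> angle4 p \<le> angle4 b)"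
proof (cases "p = 0")
  case False
  have D: "det2 a b < 0"
    using angle4_less_iff[OF a b] ab by simp
  have "p \<in> quad4" if "p \<in> sector a b"
    using that a b unfolding sector_def quad4_def
    by (force intro: add_nonneg_nonneg add_nonpos_nonpos mult_nonneg_nonneg mult_nonneg_nonpos)
  moreover have "p \<in> sector a b \<longleftrightarrow> det2 p b \<le> 0 \<and> det2 a p \<le> 0"
    using D by (simp add: sector_iff zero_le_divide_iff)
  ultimately show ?thesis
    using angle4_le_iff[OF a _ False] angle4_le_iff[OF _ False b] False by blast
qed (force simp: sector_def)

lemma quad4_add_open:
  assumes "p \<in> quad4" "q \<in> quad4" "det2 p q \<noteq> 0"
  shows "0 < fst (p + q)" "snd (p + q) < 0"
proof -
  have "\<not> (fst p = 0 \<and> fst q = 0)" "\<not> (snd p = 0 \<and> snd q = 0)"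
    using assms(3) by (auto simp: det2_def)
  then show "0 < fst (p + q)" "snd (p + q) < 0"
    using assms(1,2) by (auto simp: quad4_def)
qed

lemma angle4_add_between:
  assumes "p \<in> quad4" "p \<noteq> 0" "q \<in> quad4" "q \<noteq> 0" "det2 p q < 0"
  shows "angle4 p < angle4 (p + q)" "angle4 (p + q) < angle4 q"
proof -
  have "0 < fst (p + q)" "snd (p + q) < 0"
    using quad4_add_open[OF assms(1,3)] assms(5) by auto
  then have "p + q \<in> quad4" "p + q \<noteq> 0"
    by (auto simp: quad4_def simp del: fst_add snd_add)
  then show "angle4 p < angle4 (p + q)" "angle4 (p + q) < angle4 q"
    using angle4_less_iff assms by (simp_all add: det2_simps)
qed

section \<open>Neighbours in a linearly ordered set\<close>

definition adjacent :: "('a \<Rightarrow> 'b::linorder) \<Rightarrow> 'a set \<Rightarrow> 'a \<Rightarrow> 'a \<Rightarrow> bool" where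
  "adjacent f R x y \<longleftrightarrow> x \<in> R \<and> y \<in> R \<and> f x < f y \<and> \<not> (\<exists>z\<in>R. f x < f z \<and> f z < f y)"

lemma adjacent_between:
  assumes "inj_on f R" "adjacent f R x y" "z \<in> R" "f x \<le> f z" "f z \<le> f y"
  shows "z = x \<or> z = y"
proof (rule ccontr)
  assume "\<not> (z = x \<or> z = y)"
  then have "f z \<noteq> f x" "f z \<noteq> f y"
    using assms(1-3) unfolding adjacent_def inj_on_def by blast+
  then show False
    using assms(2-5) unfolding adjacent_def by auto
qed

lemma adjacent_right_unique:
  assumes "inj_on f R" "adjacent f R x y" "adjacent f R x y'"
  shows "y' = y"
proof -
  have "\<not> f y < f y'" "f x < f y'" "y' \<in> R"
    using assms(2,3) unfolding adjacent_def by blast+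
  then show ?thesis
    using adjacent_between[OF assms(1,2), of y'] by (force simp: not_less)
qed

lemma adjacent_left_unique:
  assumes "inj_on f R" "adjacent f R x y" "adjacent f R x' y"
  shows "x' = x"
proof -
  have "\<not> f x' < f x" "f x' < f y" "x' \<in> R"
    using assms(2,3) unfolding adjacent_def by blast+
  then show ?thesis
    using adjacent_between[OF assms(1,2), of x'] by (force simp: not_less)
qed

lemma adjacent_unique_around:
  assumes "inj_on f R" "adjacent f R a b" "adjacent f R x y"
    and "f a \<le> t" "t \<le> f b" "f x < t" "t < f y"
  shows "a = x \<and> b = y"
proof -
  have "f a \<le> f x" "f y \<le> f b"
    using assms(2-7) unfolding adjacent_def by (meson le_less_trans less_le_trans not_le)+
  then show ?thesis
    using adjacent_between[OF assms(1,2)] assms(3-7) unfolding adjacent_def by fastforce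
qed

lemma exists_adjacent_left:
  assumes "finite R" "w \<in> R" "z \<in> R" "f z < f w"
  shows "\<exists>u. adjacent f R u w"
proof -
  define L where "L = {z \<in> R. f z < f w}"
  have "finite L" "z \<in> L"
    using assms by (auto simp: L_def)
  then have "Max (f ` L) \<in> f ` L"
    by (intro Max_in) auto
  moreover have "\<forall>z\<in>L. f z \<le> Max (f ` L)"
    using \<open>finite L\<close> by simp
  ultimately obtain u where "u \<in> L" "\<forall>z\<in>L. f z \<le> f u"
    by auto
  then have "adjacent f R u w"
    using assms(2) unfolding adjacent_def L_def by force
  then show ?thesis ..
qed

lemma exists_adjacent_right:
  assumes "finite R" "w \<in> R" "z \<in> R" "f w < f z"
  shows "\<exists>v. adjacent f R w v"
proof -
  define U where "U = {z \<in> R. f w < f z}"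
  have "finite U" "z \<in> U"
    using assms by (auto simp: U_def)
  then have "Min (f ` U) \<in> f ` U"
    by (intro Min_in) auto
  moreover have "\<forall>z\<in>U. Min (f ` U) \<le> f z"
    using \<open>finite U\<close> by simp
  ultimately obtain v where "v \<in> U" "\<forall>z\<in>U. f v \<le> f z"
    by auto
  then have "adjacent f R w v"
    using assms(2) unfolding adjacent_def U_def by force
  then show ?thesis ..
qed

lemma adjacent_DiffI:
  "adjacent f R x y \<Longrightarrow> x \<noteq> w \<Longrightarrow> y \<noteq> w \<Longrightarrow> adjacent f (R - {w}) x y"
  unfolding adjacent_def by blast

lemma adjacent_DiffD:
  assumes inj: "inj_on f R" and uw: "adjacent f R u w" and wv: "adjacent f R w v"
    and xy: "adjacent f (R - {w}) x y"
  shows "adjacent f R x y \<or> (x = u \<and> y = v)"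
proof (cases "f x < f w \<and> f w < f y")
  case True
  have "u \<in> R - {w}" "v \<in> R - {w}"
    using uw wv unfolding adjacent_def by auto
  then have "f u \<le> f x" "f y \<le> f v"
    using True xy uw wv unfolding adjacent_def by (meson le_less_linear less_trans)+
  then have "x = u" "y = v"
    using True xy adjacent_between[OF inj uw, of x] adjacent_between[OF inj wv, of y]
    unfolding adjacent_def by auto
  then show ?thesis by blast
next
  case False
  then show ?thesis
    using xy unfolding adjacent_def by blast
qed

lemma adjacent_Diff_neighbours:
  assumes inj: "inj_on f R" and uw: "adjacent f R u w" and wv: "adjacent f R w v"
  shows "adjacent f (R - {w}) u v"
proof -
  have "u \<in> R - {w}" "v \<in> R - {w}" "f u < f v"
    using uw wv unfolding adjacent_def by auto
  moreover have False if z: "z \<in> R" "z \<noteq> w" "f u < f z" "f z < f v" for z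
  proof -
    have "f z \<noteq> f w"
      using inj uw z unfolding adjacent_def inj_on_def by blast
    then show False
      using z uw wv unfolding adjacent_def by (meson linorder_neqE)
  qed
  ultimately show ?thesis
    unfolding adjacent_def by blast
qed

lemma adjacent_cases_Diff:
  assumes inj: "inj_on f R" and uw: "adjacent f R u w" and wv: "adjacent f R w v"
    and xy: "adjacent f R x y"
  shows "adjacent f (R - {w}) x y \<or> (x = u \<and> y = w) \<or> (x = w \<and> y = v)"
proof -
  consider "x = w" | "y = w" | "x \<noteq> w" "y \<noteq> w"
    by blast
  then show ?thesis
  proof cases
    case 1
    then show ?thesis
      using adjacent_right_unique[OF inj wv, of y] xy by simp
  next
    case 2
    then show ?thesis
      using adjacent_left_unique[OF inj uw, of x] xy by simp
  next
    case 3
    then show ?thesis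
      using adjacent_DiffI[OF xy] by simp
  qed
qed

section \<open>Unimodular chains and their fans\<close>

definition primitive_quad4 :: "lvec set" where
  "primitive_quad4 = {w. primitive w \<and> rv w \<in> quad4}"

definition lattice_angle :: "lvec \<Rightarrow> real" where
  "lattice_angle w = angle4 (rv w)"

lemma rv_in_quad4_iff: "rv w \<in> quad4 \<longleftrightarrow> 0 \<le> fst w \<and> snd w \<le> 0"
  by (simp add: rv_def quad4_def)

lemma primitive_quad4_rv: "w \<in> primitive_quad4 \<Longrightarrow> rv w \<in> quad4 \<and> rv w \<noteq> 0"
  by (simp add: primitive_quad4_def primitive_rv_nonzero)

lemma axes_in_primitive_quad4: "(1, 0) \<in> primitive_quad4" "(0, -1) \<in> primitive_quad4"
  by (simp_all add: primitive_quad4_def primitive_def rv_in_quad4_iff)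

lemma lattice_angle_axes: "lattice_angle (1, 0) = 0" "lattice_angle (0, -1) = 1"
  by (simp_all add: lattice_angle_def angle4_def rv_def)

lemma lattice_angle_bounds:
  "w \<in> primitive_quad4 \<Longrightarrow> 0 \<le> lattice_angle w \<and> lattice_angle w \<le> 1"
  using angle4_bounds primitive_quad4_rv by (simp add: lattice_angle_def)

lemma lattice_angle_less_iff:
  assumes "u \<in> primitive_quad4" "v \<in> primitive_quad4"
  shows "lattice_angle u < lattice_angle v \<longleftrightarrow> ldet u v < 0"
  using angle4_less_iff[of "rv u" "rv v"] primitive_quad4_rv[OF assms(1)]
    primitive_quad4_rv[OF assms(2)] by (simp add: lattice_angle_def det2_rv)

lemma inj_on_lattice_angle: "inj_on lattice_angle primitive_quad4"
proof
  fix u v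
  assume uv: "u \<in> primitive_quad4" "v \<in> primitive_quad4" "lattice_angle u = lattice_angle v"
  then obtain c where "rv u = c *\<^sub>R rv v" "0 < c"
    using angle4_eq_imp_proportional primitive_quad4_rv unfolding lattice_angle_def by metis
  moreover have "primitive u" "primitive v"
    using uv by (simp_all add: primitive_quad4_def)
  ultimately show "u = v"
    using primitive_proportional_eq by blast
qed

lemma primitive_quad4_l1_norm:
  assumes "w \<in> primitive_quad4"
  shows "1 \<le> fst w - snd w" "fst w - snd w = 1 \<Longrightarrow> w = (1, 0) \<or> w = (0, -1)"
proof -
  have "0 \<le> fst w" "snd w \<le> 0" "w \<noteq> (0, 0)"
    using assms by (auto simp: primitive_quad4_def primitive_def rv_in_quad4_iff)
  then show "1 \<le> fst w - snd w" "fst w - snd w = 1 \<Longrightarrow> w = (1, 0) \<or> w = (0, -1)"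
    by (cases w; auto)+
qed

lemma lattice_angle_rv_add:
  assumes "x \<in> primitive_quad4" "y \<in> primitive_quad4" "lattice_angle x < lattice_angle y"
  shows "lattice_angle x < angle4 (rv x + rv y)" "angle4 (rv x + rv y) < lattice_angle y"
    "0 < fst (rv x + rv y)" "snd (rv x + rv y) < 0"
proof -
  have "det2 (rv x) (rv y) < 0"
    using assms lattice_angle_less_iff by (simp add: det2_rv)
  then show "lattice_angle x < angle4 (rv x + rv y)" "angle4 (rv x + rv y) < lattice_angle y"
    "0 < fst (rv x + rv y)" "snd (rv x + rv y) < 0"
    using angle4_add_between[of "rv x" "rv y"] quad4_add_open[of "rv x" "rv y"]
      primitive_quad4_rv assms(1,2) by (auto simp: lattice_angle_def)
qed

lemma angle4_in_cone_gen_pair: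
  assumes "a \<in> primitive_quad4" "b \<in> primitive_quad4" "lattice_angle a < lattice_angle b"
    and "p \<in> cone_gen {a, b}" "p \<noteq> 0"
  shows "lattice_angle a \<le> angle4 p" "angle4 p \<le> lattice_angle b"
proof -
  have "a \<noteq> b"
    using assms(3) by auto
  then show "lattice_angle a \<le> angle4 p" "angle4 p \<le> lattice_angle b"
    using assms sector_quad4_iff[of "rv a" "rv b" p] primitive_quad4_rv
    by (auto simp: cone_gen_pair lattice_angle_def)
qed

lemma lattice_angle_cone_gen_singleton:
  assumes "a \<in> primitive_quad4" "z \<in> primitive_quad4" "rv z \<in> cone_gen {a}"
  shows "lattice_angle z = lattice_angle a"
  using angle4_ray[of "rv a" "rv z"] assms primitive_quad4_rv
  by (simp add: lattice_angle_def cone_gen_singleton)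

definition unimodular_chain :: "lvec set \<Rightarrow> bool" where
  "unimodular_chain R \<longleftrightarrow> finite R \<and> R \<subseteq> primitive_quad4 \<and> (1, 0) \<in> R \<and> (0, -1) \<in> R \<and>
     (\<forall>x y. adjacent lattice_angle R x y \<longrightarrow> ldet x y = -1)"

lemma unimodular_chainD:
  assumes "unimodular_chain R"
  shows "finite R" "R \<subseteq> primitive_quad4" "(1, 0) \<in> R" "(0, -1) \<in> R"
    "inj_on lattice_angle R" "adjacent lattice_angle R x y \<Longrightarrow> ldet x y = -1"
  using assms inj_on_subset[OF inj_on_lattice_angle] unfolding unimodular_chain_def by blast+

definition outer_cones :: "cone2 set" where
  "outer_cones = {cone_gen {}, cone_gen {(1, 0)}, cone_gen {(0, 1)}, cone_gen {(-1, 0)},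
     cone_gen {(0, -1)}, cone_gen {(1, 0), (0, 1)}, cone_gen {(-1, 0), (0, 1)},
     cone_gen {(-1, 0), (0, -1)}}"

lemma faces_in_outer_cones:
  assumes "ldet a b \<noteq> 0" "T face_of cone_gen {a, b}" "T \<noteq> {}"
    and "cone_gen {a, b} \<in> outer_cones" "cone_gen {a} \<in> outer_cones" "cone_gen {b} \<in> outer_cones"
  shows "T \<in> outer_cones"
proof -
  have "cone_gen {} \<in> outer_cones"
    by (simp add: outer_cones_def)
  then show ?thesis
    using faces_of_cone_gen_pair[OF assms(1,2)] assms(3-6) by blast
qed

definition chain_fan :: "lvec set \<Rightarrow> cone2 set" where
  "chain_fan R = outer_cones \<union> (\<lambda>w. cone_gen {w}) ` R \<union>
     {cone_gen {x, y} | x y. adjacent lattice_angle R x y}"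

lemma Sigma0000_eq_chain_fan: "Sigma0000 = chain_fan {(1, 0), (0, -1)}"
proof -
  have "adjacent lattice_angle {(1, 0), (0, -1)} x y \<longleftrightarrow> x = (1, 0) \<and> y = (0, -1)" for x y
    by (auto simp: adjacent_def lattice_angle_axes)
  then have "{cone_gen {x, y} | x y. adjacent lattice_angle {(1, 0), (0, -1)} x y} =
      {cone_gen {(1, 0), (0, -1)}}"
    by auto
  then show ?thesis
    unfolding chain_fan_def outer_cones_def Sigma0000_def by auto
qed

lemma ldet_blowdown_relation:
  assumes "ldet u w = -1" "ldet w v = -1"
  shows "u + v = (ldet v u * fst w, ldet v u * snd w)"
proof -
  obtain u1 u2 v1 v2 w1 w2 where "u = (u1, u2)" "v = (v1, v2)" "w = (w1, w2)"
    by (cases u, cases v, cases w) auto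
  moreover have "(u1 * w2 - u2 * w1) * v1 + (w1 * v2 - w2 * v1) * u1 + (v1 * u2 - v2 * u1) * w1 = 0"
    "(u1 * w2 - u2 * w1) * v2 + (w1 * v2 - w2 * v1) * u2 + (v1 * u2 - v2 * u1) * w2 = 0"
    by algebra+
  ultimately show ?thesis
    using assms by (simp add: ldet_def)
qed

lemma l1_norm_ne_if_unimodular:
  assumes "\<bar>ldet x y\<bar> = 1" "2 \<le> fst y - snd y"
  shows "fst x - snd x \<noteq> fst y - snd y"
proof
  assume "fst x - snd x = fst y - snd y"
  then have "ldet x y = (fst y - snd y) * (fst y - fst x)"
    unfolding ldet_def by algebra
  then have "fst y - snd y dvd \<bar>ldet x y\<bar>"
    by simp
  then show False
    using assms by simp
qed

lemma exists_l1_norm_ge_2: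
  assumes "R \<subseteq> primitive_quad4" "3 \<le> card R"
  shows "\<exists>z\<in>R. 2 \<le> fst z - snd z"
proof (rule ccontr)
  assume small: "\<not> (\<exists>z\<in>R. 2 \<le> fst z - snd z)"
  have "z \<in> {(1, 0), (0, -1)}" if "z \<in> R" for z
  proof -
    have "z \<in> primitive_quad4"
      using that assms(1) by blast
    moreover have "fst z - snd z = 1"
      using primitive_quad4_l1_norm(1)[OF calculation] small that by fastforce
    ultimately show ?thesis
      using primitive_quad4_l1_norm(2) by blast
  qed
  then have "card R \<le> card {(1::int, 0::int), (0, -1)}"
    by (intro card_mono) auto
  then show False
    using assms(2) by simp
qed

lemma lattice_angle_strict_bounds:
  assumes "w \<in> primitive_quad4" "w \<noteq> (1, 0)" "w \<noteq> (0, -1)"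
  shows "0 < lattice_angle w" "lattice_angle w < 1"
proof -
  have "lattice_angle w \<noteq> lattice_angle (1, 0)" "lattice_angle w \<noteq> lattice_angle (0, -1)"
    using assms inj_onD[OF inj_on_lattice_angle] axes_in_primitive_quad4 by metis+
  then show "0 < lattice_angle w" "lattice_angle w < 1"
    using lattice_angle_bounds[OF assms(1)] lattice_angle_axes by auto
qed

text \<open>Take w of maximal l1-norm N. Its neighbours sum to k w with k = ldet v u, and a
  unimodular neighbour cannot have the same norm N \<ge> 2, so 2 \<le> k N < 2 N forces k = 1.\<close>
lemma unimodular_chain_blowdown:
  assumes ch: "unimodular_chain R" and card: "3 \<le> card R"
  shows "\<exists>u w v. adjacent lattice_angle R u w \<and> adjacent lattice_angle R w v \<and> w = u + v"
proof -
  note R = unimodular_chainD[OF ch]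
  define N where "N w = fst w - snd w" for w :: lvec
  have "Max (N ` R) \<in> N ` R"
    using R(1,3) by (intro Max_in) auto
  then obtain w where w: "w \<in> R" "N w = Max (N ` R)"
    by auto
  have Nmax: "N z \<le> N w" and N1: "1 \<le> N z" if "z \<in> R" for z
    using w R(1,2) that primitive_quad4_l1_norm by (auto simp: N_def)
  have "2 \<le> N w"
    using exists_l1_norm_ge_2[OF R(2) card] Nmax unfolding N_def by fastforce
  then have "w \<in> primitive_quad4" "w \<noteq> (1, 0)" "w \<noteq> (0, -1)"
    using w(1) R(2) by (auto simp: N_def)
  then have "lattice_angle (1, 0) < lattice_angle w" "lattice_angle w < lattice_angle (0, -1)"
    using lattice_angle_strict_bounds lattice_angle_axes by simp_all
  then obtain u v where uw: "adjacent lattice_angle R u w" and wv: "adjacent lattice_angle R w v"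
    using exists_adjacent_left[OF R(1) w(1) R(3)] exists_adjacent_right[OF R(1) w(1) R(4)]
    by blast
  have uR: "u \<in> R" and vR: "v \<in> R"
    using uw wv by (simp_all add: adjacent_def)
  have dets: "ldet u w = -1" "ldet w v = -1"
    using R(6) uw wv by blast+
  then have "N u \<noteq> N w" "N v \<noteq> N w"
    using l1_norm_ne_if_unimodular[of u w] l1_norm_ne_if_unimodular[of v w] \<open>2 \<le> N w\<close>
      ldet_commute[of v w] unfolding N_def by auto
  then have "0 < N u + N v" "N u + N v < 2 * N w"
    using Nmax[OF uR] Nmax[OF vR] N1[OF uR] N1[OF vR] by linarith+
  moreover have "fst u + fst v = ldet v u * fst w" "snd u + snd v = ldet v u * snd w"
    using ldet_blowdown_relation[OF dets] by (simp_all add: prod_eq_iff)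
  then have "N u + N v = ldet v u * N w"
    by (simp add: N_def right_diff_distrib)
  ultimately have "0 < ldet v u" "ldet v u < 2"
    using \<open>2 \<le> N w\<close> by (simp_all add: zero_less_mult_iff mult_less_cancel_right)
  then have "ldet v u = 1"
    by linarith
  then have "w = u + v"
    using ldet_blowdown_relation[OF dets] by simp
  then show ?thesis
    using uw wv by blast
qed

lemma unimodular_chain_Diff:
  assumes ch: "unimodular_chain R" and uw: "adjacent lattice_angle R u w"
    and wv: "adjacent lattice_angle R w v" and w: "w = u + v"
  shows "unimodular_chain (R - {w})"
proof -
  note R = unimodular_chainD[OF ch]
  have "u \<in> R" "v \<in> R" "lattice_angle u < lattice_angle w" "lattice_angle w < lattice_angle v"
    using uw wv by (auto simp: adjacent_def)
  then have "0 < lattice_angle w" "lattice_angle w < 1"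
    using lattice_angle_bounds R(2) by fastforce+
  then have "(1, 0) \<in> R - {w}" "(0, -1) \<in> R - {w}"
    using R(3,4) lattice_angle_axes by auto
  moreover have "ldet x y = -1" if "adjacent lattice_angle (R - {w}) x y" for x y
  proof -
    have "ldet u v = -1"
      using w R(6)[OF uw] by (simp add: ldet_add)
    moreover have "adjacent lattice_angle R x y \<or> (x = u \<and> y = v)"
      using adjacent_DiffD[OF R(5) uw wv that] .
    ultimately show ?thesis
      using R(6)[of x y] by blast
  qed
  ultimately show ?thesis
    using R(1,2) by (auto simp: unimodular_chain_def)
qed

lemma chain_vector_in_adjacent_cone:
  assumes ch: "unimodular_chain R" and xy: "adjacent lattice_angle R x y"
    and z: "z \<in> R" "rv z \<in> cone_gen {x, y}"
  shows "z = x \<or> z = y"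
proof -
  note R = unimodular_chainD[OF ch]
  have "lattice_angle x \<le> lattice_angle z" "lattice_angle z \<le> lattice_angle y"
    using xy z R(2) angle4_in_cone_gen_pair[of x y "rv z"] primitive_quad4_rv[of z]
    by (auto simp: adjacent_def lattice_angle_def)
  then show ?thesis
    using adjacent_between[OF R(5) xy z(1)] by blast
qed

lemma outer_cones_avoid_open_quad4:
  assumes "X \<in> outer_cones" "p \<in> X"
  shows "fst p \<le> 0 \<or> 0 \<le> snd p"
  using assms unfolding outer_cones_def
  by (auto simp: cone_gen_empty cone_gen_singleton cone_gen_pair ray_def sector_def rv_def)

lemma det2_ray: "p \<in> ray a \<Longrightarrow> q \<in> ray a \<Longrightarrow> det2 p q = 0"
  by (auto simp: ray_def det2_simps)

lemma blowdown_cone_not_in_chain_fan: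
  assumes ch: "unimodular_chain R" and uw: "adjacent lattice_angle R u w"
    and wv: "adjacent lattice_angle R w v" and w: "w = u + v"
  shows "cone_gen {u, v} \<notin> chain_fan R"
proof
  assume in_fan: "cone_gen {u, v} \<in> chain_fan R"
  note R = unimodular_chainD[OF ch]
  have "ldet u v = -1"
    using R(6)[OF uw] w by (simp add: ldet_add)
  then have uv: "cone_gen {u, v} = sector (rv u) (rv v)" "det2 (rv u) (rv v) = -1"
    using cone_gen_pair_sector[of u v] by (simp_all add: det2_rv)
  have mem: "rv u \<in> cone_gen {u, v}" "rv v \<in> cone_gen {u, v}" "rv w \<in> cone_gen {u, v}"
    unfolding uv w rv_add by (simp_all add: sector_corners)
  have "u \<in> R" "v \<in> R" "w \<in> R"
    using uw wv by (auto simp: adjacent_def)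
  then have "rv u \<in> quad4" "rv v \<in> quad4"
    using R(2) primitive_quad4_rv by blast+
  then have "0 < fst (rv w)" "snd (rv w) < 0"
    using quad4_add_open[of "rv u" "rv v"] uv(2) by (simp_all add: w rv_add)
  moreover have "u \<noteq> w" "w \<noteq> v" "u \<noteq> v"
    using uw wv by (auto simp: adjacent_def)
  ultimately show False
    using in_fan unfolding chain_fan_def
  proof (elim UnE imageE CollectE exE conjE)
    assume "cone_gen {u, v} \<in> outer_cones"
    then show False
      using outer_cones_avoid_open_quad4 mem(3) \<open>0 < fst (rv w)\<close> \<open>snd (rv w) < 0\<close> by fastforce
  next
    fix e
    assume "cone_gen {u, v} = cone_gen {e}"
    then show False
      using det2_ray[of "rv u" "rv e" "rv v"] mem uv(2) by (simp add: cone_gen_singleton)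
  next
    fix x y
    assume "cone_gen {u, v} = cone_gen {x, y}" "adjacent lattice_angle R x y"
    then show False
      using chain_vector_in_adjacent_cone[OF ch] mem \<open>u \<in> R\<close> \<open>v \<in> R\<close> \<open>w \<in> R\<close>
        \<open>u \<noteq> w\<close> \<open>w \<noteq> v\<close> \<open>u \<noteq> v\<close> by metis
  qed
qed

lemma chain_fan_Diff:
  assumes ch: "unimodular_chain R" and uw: "adjacent lattice_angle R u w"
    and wv: "adjacent lattice_angle R w v" and w: "w = u + v"
  shows "chain_fan R = (chain_fan (R - {w}) - {cone_gen {u, v}}) \<union>
    {cone_gen {u + v}, cone_gen {u, u + v}, cone_gen {v, u + v}}"
proof -
  define pairs where "pairs S = {cone_gen {x, y} | x y. adjacent lattice_angle S x y}" for S
  define rays where "rays S = (\<lambda>e. cone_gen {e}) ` S" for S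
  note R = unimodular_chainD[OF ch]
  have "w \<in> R"
    using uw by (simp add: adjacent_def)
  then have "rays R = rays (R - {w}) \<union> {cone_gen {w}}"
    unfolding rays_def by blast
  moreover have "pairs R \<subseteq> pairs (R - {w}) \<union> {cone_gen {u, w}, cone_gen {w, v}}"
  proof
    fix X
    assume "X \<in> pairs R"
    then obtain x y where "adjacent lattice_angle R x y" "X = cone_gen {x, y}"
      unfolding pairs_def by blast
    then show "X \<in> pairs (R - {w}) \<union> {cone_gen {u, w}, cone_gen {w, v}}"
      using adjacent_cases_Diff[OF R(5) uw wv] unfolding pairs_def by blast
  qed
  moreover have "pairs (R - {w}) \<subseteq> pairs R \<union> {cone_gen {u, v}}"
  proof
    fix X
    assume "X \<in> pairs (R - {w})"
    then obtain x y where "adjacent lattice_angle (R - {w}) x y" "X = cone_gen {x, y}"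
      unfolding pairs_def by blast
    then show "X \<in> pairs R \<union> {cone_gen {u, v}}"
      using adjacent_DiffD[OF R(5) uw wv] unfolding pairs_def by blast
  qed
  moreover have "cone_gen {u, v} \<notin> chain_fan R"
    by (rule blowdown_cone_not_in_chain_fan[OF assms])
  moreover have "cone_gen {w} \<in> rays R" "cone_gen {u, w} \<in> pairs R" "cone_gen {w, v} \<in> pairs R"
    using \<open>w \<in> R\<close> uw wv unfolding rays_def pairs_def by blast+
  ultimately have "chain_fan R = (chain_fan (R - {w}) - {cone_gen {u, v}}) \<union>
      {cone_gen {w}, cone_gen {u, w}, cone_gen {w, v}}"
    unfolding chain_fan_def rays_def[symmetric] pairs_def[symmetric] by blast
  then show ?thesis
    by (simp add: w insert_commute)
qed

lemma chain_fan_blowup: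
  assumes ch: "unimodular_chain R" and uw: "adjacent lattice_angle R u w"
    and wv: "adjacent lattice_angle R w v" and w: "w = u + v"
  shows "subdivision_step (chain_fan (R - {w})) (chain_fan R)"
proof -
  note R = unimodular_chainD[OF ch]
  have uv: "adjacent lattice_angle (R - {w}) u v"
    by (rule adjacent_Diff_neighbours[OF R(5) uw wv])
  then have "cone_gen {u, v} \<in> chain_fan (R - {w})"
    unfolding chain_fan_def by blast
  moreover have "aff_dim (cone_gen {u, v}) = 2"
    using unimodular_chainD(6)[OF unimodular_chain_Diff[OF assms] uv]
    by (simp add: aff_dim_cone_gen_pair)
  moreover have "primitive u" "primitive v"
    using uw wv R(2) by (auto simp: adjacent_def primitive_quad4_def)
  ultimately show ?thesis
    unfolding subdivision_step_def cones_dim_def using chain_fan_Diff[OF assms] by blast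
qed

lemma chain_fan_reachable: "unimodular_chain R \<Longrightarrow> subdivision_step\<^sup>*\<^sup>* Sigma0000 (chain_fan R)"
proof (induction "card R" arbitrary: R rule: less_induct)
  case less
  note R = unimodular_chainD[OF less.prems]
  show ?case
  proof (cases "3 \<le> card R")
    case True
    then obtain u w v where uwv: "adjacent lattice_angle R u w" "adjacent lattice_angle R w v"
      "w = u + v"
      using unimodular_chain_blowdown[OF less.prems] by blast
    then have "w \<in> R"
      by (simp add: adjacent_def)
    then have "subdivision_step\<^sup>*\<^sup>* Sigma0000 (chain_fan (R - {w}))"
      using less.hyps card_Diff1_less[OF R(1)] unimodular_chain_Diff[OF less.prems uwv] by blast
    then show ?thesis
      using chain_fan_blowup[OF less.prems uwv] by (rule rtranclp.rtrancl_into_rtrancl)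
  next
    case False
    have "{(1, 0), (0, -1)} \<subseteq> R"
      using R(3,4) by simp
    moreover have "card R \<le> card {(1::int, 0::int), (0, -1)}"
      using False by simp
    ultimately have "R = {(1, 0), (0, -1)}"
      using card_seteq[OF R(1)] by blast
    then show ?thesis
      by (simp add: Sigma0000_eq_chain_fan)
  qed
qed

section \<open>Fans of the class are chain fans\<close>

definition quad4_rays :: "cone2 set \<Rightarrow> lvec set" where
  "quad4_rays \<Sigma> = {w \<in> primitive_quad4. cone_gen {w} \<in> \<Sigma>}"

locale sc_fan =
  fixes \<Sigma> :: "cone2 set"
  assumes mem_cFan_sc: "\<Sigma> \<in> cFan_sc"
begin

lemma finite_fan: "finite \<Sigma>"
  using mem_cFan_sc by (simp add: cFan_sc_def complete_fan_def is_fan_def)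

lemma face_in_fan: "\<sigma> \<in> \<Sigma> \<Longrightarrow> \<tau> face_of \<sigma> \<Longrightarrow> \<tau> \<noteq> {} \<Longrightarrow> \<tau> \<in> \<Sigma>"
  using mem_cFan_sc by (simp add: cFan_sc_def complete_fan_def is_fan_def)

lemma fan_Int_face_of: "\<sigma> \<in> \<Sigma> \<Longrightarrow> \<tau> \<in> \<Sigma> \<Longrightarrow> (\<sigma> \<inter> \<tau>) face_of \<sigma>"
  using mem_cFan_sc by (simp add: cFan_sc_def complete_fan_def is_fan_def)

lemma fan_covers: "\<exists>\<sigma>\<in>\<Sigma>. p \<in> \<sigma>"
  using mem_cFan_sc by (auto simp: cFan_sc_def complete_fan_def)

lemma zero_in_cone: "\<sigma> \<in> \<Sigma> \<Longrightarrow> 0 \<in> \<sigma>"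
  using mem_cFan_sc by (auto simp: cFan_sc_def complete_fan_def is_fan_def scrp_cone_def)

lemma quadrants_in_fan:
  "cone_gen {(1, 0), (0, 1)} \<in> \<Sigma>" "cone_gen {(-1, 0), (0, 1)} \<in> \<Sigma>"
  "cone_gen {(-1, 0), (0, -1)} \<in> \<Sigma>"
  using mem_cFan_sc by (simp_all add: cFan_sc_def)

lemma cone_in_closed_quadrant: "\<sigma> \<in> \<Sigma> \<Longrightarrow> in_closed_quadrant \<sigma>"
  using mem_cFan_sc by (simp add: cFan_sc_def)

lemma two_dim_cone_unimodular:
  "\<sigma> \<in> \<Sigma> \<Longrightarrow> aff_dim \<sigma> = 2 \<Longrightarrow> \<exists>u v. \<bar>ldet u v\<bar> = 1 \<and> \<sigma> = cone_gen {u, v}"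
  using mem_cFan_sc by (auto simp: cFan_sc_def nonsingular_def cones_dim_def ldet_def)

lemma ray_in_two_cones:
  "\<rho> \<in> \<Sigma> \<Longrightarrow> aff_dim \<rho> = 1 \<Longrightarrow> card {\<sigma> \<in> cones_dim \<Sigma> 2. \<rho> face_of \<sigma>} = 2"
  using mem_cFan_sc by (auto simp: cFan_sc_def cones_dim_def)

lemma cone_gen_faces_in_fan:
  assumes "cone_gen {u, v} \<in> \<Sigma>" "ldet u v \<noteq> 0"
  shows "cone_gen {} \<in> \<Sigma>" "cone_gen {u} \<in> \<Sigma>" "cone_gen {v} \<in> \<Sigma>"
  using face_in_fan[OF assms(1)] cone_gen_faces_of_cone_gen_pair[OF assms(2)]
  by (simp_all add: cone_gen_empty cone_gen_singleton ray_def) blast+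

text \<open>This is the only use of the hypothesis that every ray lies in two 2-dimensional cones:
  it makes the ray a face of a nonsingular cone.\<close>
lemma one_dim_cone:
  assumes "\<sigma> \<in> \<Sigma>" "aff_dim \<sigma> = 1"
  shows "\<exists>e. primitive e \<and> \<sigma> = cone_gen {e}"
proof -
  have "{\<tau> \<in> cones_dim \<Sigma> 2. \<sigma> face_of \<tau>} \<noteq> {}"
    using ray_in_two_cones[OF assms] by (metis card.empty zero_neq_numeral)
  then obtain \<tau> where "\<tau> \<in> \<Sigma>" "aff_dim \<tau> = 2" "\<sigma> face_of \<tau>"
    unfolding cones_dim_def by blast
  moreover obtain u v where uv: "\<bar>ldet u v\<bar> = 1" "\<tau> = cone_gen {u, v}"
    using two_dim_cone_unimodular calculation by blast
  moreover have "\<sigma> \<noteq> {}" "\<sigma> \<noteq> cone_gen {}" "\<sigma> \<noteq> cone_gen {u, v}"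
    using assms(2) calculation by (auto simp: cone_gen_empty)
  ultimately have "\<sigma> = cone_gen {u} \<or> \<sigma> = cone_gen {v}"
    using faces_of_cone_gen_pair[of u v \<sigma>] by force
  then show ?thesis
    using primitive_if_unimodular[OF uv(1)] by blast
qed

lemma finite_quad4_rays: "finite (quad4_rays \<Sigma>)"
proof -
  have "inj_on (\<lambda>w. cone_gen {w}) (quad4_rays \<Sigma>)"
  proof
    fix x y
    assume xy: "x \<in> quad4_rays \<Sigma>" "y \<in> quad4_rays \<Sigma>" "cone_gen {x} = cone_gen {y}"
    then have "x \<in> primitive_quad4" "y \<in> primitive_quad4"
      by (simp_all add: quad4_rays_def)
    moreover have "rv x \<in> cone_gen {y}" "rv y \<in> cone_gen {x}"
      using xy(3) by (metis cone_gen_singleton in_ray_self)+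
    ultimately have "lattice_angle x = lattice_angle y"
      using lattice_angle_cone_gen_singleton by metis
    then show "x = y"
      using inj_on_lattice_angle \<open>x \<in> primitive_quad4\<close> \<open>y \<in> primitive_quad4\<close>
      unfolding inj_on_def by blast
  qed
  moreover have "(\<lambda>w. cone_gen {w}) ` quad4_rays \<Sigma> \<subseteq> \<Sigma>"
    by (auto simp: quad4_rays_def)
  ultimately show ?thesis
    using finite_fan finite_imageD finite_subset by metis
qed

lemma cone_subset_quad4:
  assumes "\<sigma> \<in> \<Sigma>" "p \<in> \<sigma>" "0 < fst p" "snd p < 0"
  shows "\<sigma> \<subseteq> quad4"
proof -
  obtain s1 s2 :: real where "s1 \<in> {1, -1}" "s2 \<in> {1, -1}"
    and \<sigma>: "\<sigma> \<subseteq> {x. 0 \<le> s1 * fst x \<and> 0 \<le> s2 * snd x}"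
    using cone_in_closed_quadrant[OF assms(1)] unfolding in_closed_quadrant_def by blast
  moreover have "0 \<le> s1 * fst p" "0 \<le> s2 * snd p"
    using \<sigma> assms(2) by auto
  ultimately have "s1 = 1" "s2 = -1"
    using assms(3,4) by (auto simp: zero_le_mult_iff)
  then show ?thesis
    using \<sigma> by (auto simp: quad4_def)
qed

lemma two_cone_adjacent:
  assumes \<sigma>: "cone_gen {a, b} \<in> \<Sigma>" and ab: "a \<in> quad4_rays \<Sigma>" "b \<in> quad4_rays \<Sigma>"
    and det: "ldet a b = -1"
  shows "adjacent lattice_angle (quad4_rays \<Sigma>) a b"
proof -
  have P: "a \<in> primitive_quad4" "b \<in> primitive_quad4"
    using ab by (simp_all add: quad4_rays_def)
  have ab_less: "lattice_angle a < lattice_angle b"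
    using lattice_angle_less_iff[OF P] det by simp
  have "False" if z: "z \<in> quad4_rays \<Sigma>" "lattice_angle a < lattice_angle z"
    "lattice_angle z < lattice_angle b" for z
  proof -
    have zP: "z \<in> primitive_quad4" and "cone_gen {z} \<in> \<Sigma>"
      using z(1) by (simp_all add: quad4_rays_def)
    have "ray (rv z) \<subseteq> sector (rv a) (rv b)"
    proof
      fix p
      assume "p \<in> ray (rv z)"
      then show "p \<in> sector (rv a) (rv b)"
        using sector_quad4_iff[of "rv a" "rv b" p] angle4_ray[of "rv z" p] z ab_less
          primitive_quad4_rv P zP by (cases "p = 0") (auto simp: lattice_angle_def)
    qed
    then have "cone_gen {z} face_of cone_gen {a, b}"
      using fan_Int_face_of[OF \<sigma> \<open>cone_gen {z} \<in> \<Sigma>\<close>] cone_gen_pair_sector[of a b] det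
      by (simp add: cone_gen_singleton Int_absorb1)
    then have "cone_gen {z} \<in> {{}, cone_gen {}, cone_gen {a}, cone_gen {b}, cone_gen {a, b}}"
      using faces_of_cone_gen_pair[of a b] det by simp
    moreover have "rv z \<in> cone_gen {z}" "rv z \<noteq> 0" "rv b \<in> cone_gen {a, b}"
      using primitive_quad4_rv[OF zP] cone_gen_pair_sector[of a b] det
      by (simp_all add: cone_gen_singleton sector_corners)
    ultimately show False
      using lattice_angle_cone_gen_singleton[OF P(1) zP] lattice_angle_cone_gen_singleton[OF P(2) zP]
        lattice_angle_cone_gen_singleton[OF zP P(2)] z(2,3) by (auto simp: cone_gen_empty)
  qed
  then show ?thesis
    using ab ab_less unfolding adjacent_def by blast
qed

lemma two_dim_cone_in_quad4:
  assumes "\<sigma> \<in> \<Sigma>" "\<sigma> \<subseteq> quad4" "aff_dim \<sigma> = 2"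
  shows "\<exists>a b. adjacent lattice_angle (quad4_rays \<Sigma>) a b \<and> ldet a b = -1 \<and> \<sigma> = cone_gen {a, b}"
proof -
  obtain u v where uv: "\<bar>ldet u v\<bar> = 1" "\<sigma> = cone_gen {u, v}"
    using two_dim_cone_unimodular[OF assms(1,3)] by blast
  then have "rv u \<in> quad4" "rv v \<in> quad4"
    using assms(2) cone_gen_pair_sector[of u v] by (auto simp: sector_corners)
  then have R: "u \<in> quad4_rays \<Sigma>" "v \<in> quad4_rays \<Sigma>"
    using primitive_if_unimodular[OF uv(1)] cone_gen_faces_in_fan[of u v] assms(1) uv
    by (auto simp: quad4_rays_def primitive_quad4_def)
  show ?thesis
  proof (cases "ldet u v = -1")
    case True
    then show ?thesis
      using two_cone_adjacent R uv(2) assms(1) by blast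
  next
    case False
    then have "ldet v u = -1" "\<sigma> = cone_gen {v, u}"
      using uv ldet_commute[of v u] by (auto simp: insert_commute)
    then show ?thesis
      using two_cone_adjacent R assms(1) by blast
  qed
qed

lemma cone_in_quad4_cases:
  assumes "\<sigma> \<in> \<Sigma>" "\<sigma> \<subseteq> quad4"
  shows "\<sigma> = cone_gen {} \<or> (\<exists>e \<in> quad4_rays \<Sigma>. \<sigma> = cone_gen {e}) \<or>
    (\<exists>a b. adjacent lattice_angle (quad4_rays \<Sigma>) a b \<and> ldet a b = -1 \<and> \<sigma> = cone_gen {a, b})"
proof -
  have "- 1 \<le> aff_dim \<sigma>" "aff_dim \<sigma> \<le> 2"
    using aff_dim_geq[of \<sigma>] aff_dim_le_DIM[of \<sigma>] by simp_all
  then consider "aff_dim \<sigma> = -1" | "aff_dim \<sigma> = 0" | "aff_dim \<sigma> = 1" | "aff_dim \<sigma> = 2"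
    by linarith
  then show ?thesis
  proof cases
    case 1
    then have "\<sigma> = {}"
      by (metis aff_dim_empty)
    then show ?thesis
      using zero_in_cone[OF assms(1)] by simp
  next
    case 2
    then show ?thesis
      using zero_in_cone[OF assms(1)] by (auto simp: aff_dim_eq_0 cone_gen_empty)
  next
    case 3
    then obtain e where "primitive e" "\<sigma> = cone_gen {e}"
      using one_dim_cone[OF assms(1)] by blast
    moreover have "rv e \<in> quad4"
      using assms(2) calculation by (auto simp: cone_gen_singleton)
    ultimately have "e \<in> quad4_rays \<Sigma>"
      using assms(1) by (simp add: quad4_rays_def primitive_quad4_def)
    then show ?thesis
      using \<open>\<sigma> = cone_gen {e}\<close> by blast
  next
    case 4
    then show ?thesis
      using two_dim_cone_in_quad4[OF assms] by blast
  qed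
qed

lemma adjacent_cone_in_fan:
  assumes xy: "adjacent lattice_angle (quad4_rays \<Sigma>) x y"
  shows "cone_gen {x, y} \<in> \<Sigma>" "ldet x y = -1"
proof -
  define p where "p = rv x + rv y"
  have P: "x \<in> primitive_quad4" "y \<in> primitive_quad4"
    using xy by (auto simp: adjacent_def quad4_rays_def)
  have "lattice_angle x < lattice_angle y"
    using xy by (simp add: adjacent_def)
  then have angles: "lattice_angle x < angle4 p" "angle4 p < lattice_angle y"
    and p: "0 < fst p" "snd p < 0"
    using lattice_angle_rv_add[OF P] unfolding p_def by blast+
  then have "p \<noteq> 0"
    by auto
  obtain \<sigma> where \<sigma>: "\<sigma> \<in> \<Sigma>" "p \<in> \<sigma>"
    using fan_covers by blast
  have "\<sigma> \<subseteq> quad4"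
    using cone_subset_quad4[OF \<sigma> p] .
  then consider "\<sigma> = cone_gen {}" | e where "e \<in> quad4_rays \<Sigma>" "\<sigma> = cone_gen {e}"
    | a b where "adjacent lattice_angle (quad4_rays \<Sigma>) a b" "ldet a b = -1" "\<sigma> = cone_gen {a, b}"
    using cone_in_quad4_cases[OF \<sigma>(1)] by blast
  then have "cone_gen {x, y} \<in> \<Sigma> \<and> ldet x y = -1"
  proof cases
    case 1
    then show ?thesis
      using \<sigma>(2) \<open>p \<noteq> 0\<close> by (simp add: cone_gen_empty)
  next
    case 2
    then have "angle4 p = lattice_angle e"
      using \<sigma>(2) \<open>p \<noteq> 0\<close> angle4_ray[of "rv e" p] primitive_quad4_rv
      by (auto simp: quad4_rays_def lattice_angle_def cone_gen_singleton)
    then show ?thesis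
      using xy angles 2(1) unfolding adjacent_def by auto
  next
    case 3
    then have "lattice_angle a \<le> angle4 p" "angle4 p \<le> lattice_angle b"
      using \<sigma>(2) \<open>p \<noteq> 0\<close> angle4_in_cone_gen_pair[of a b p]
      by (auto simp: adjacent_def quad4_rays_def)
    then have "a = x \<and> b = y"
      using adjacent_unique_around[OF inj_on_subset[OF inj_on_lattice_angle] 3(1) xy] angles
      by (auto simp: quad4_rays_def)
    then show ?thesis
      using \<sigma>(1) 3(2,3) by simp
  qed
  then show "cone_gen {x, y} \<in> \<Sigma>" "ldet x y = -1"
    by simp_all
qed

lemma unimodular_chain_quad4_rays: "unimodular_chain (quad4_rays \<Sigma>)"
proof -
  have "cone_gen {(1, 0)} \<in> \<Sigma>" "cone_gen {(0, -1)} \<in> \<Sigma>"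
    using cone_gen_faces_in_fan[OF quadrants_in_fan(1)] cone_gen_faces_in_fan[OF quadrants_in_fan(3)]
    by (simp_all add: ldet_def)
  then have "(1, 0) \<in> quad4_rays \<Sigma>" "(0, -1) \<in> quad4_rays \<Sigma>"
    using axes_in_primitive_quad4 by (simp_all add: quad4_rays_def)
  then show ?thesis
    using finite_quad4_rays adjacent_cone_in_fan(2)
    by (auto simp: unimodular_chain_def quad4_rays_def)
qed

lemma cone_in_quadrant:
  assumes "\<sigma> \<in> \<Sigma>" "\<sigma> \<subseteq> cone_gen {a, b}" "cone_gen {a, b} \<in> \<Sigma>" "ldet a b \<noteq> 0"
    and "cone_gen {a, b} \<in> outer_cones" "cone_gen {a} \<in> outer_cones" "cone_gen {b} \<in> outer_cones"
  shows "\<sigma> \<in> outer_cones"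
proof (rule faces_in_outer_cones[OF assms(4) _ _ assms(5-7)])
  show "\<sigma> face_of cone_gen {a, b}"
    using fan_Int_face_of[OF assms(3,1)] assms(2) by (simp add: Int_absorb1)
  show "\<sigma> \<noteq> {}"
    using zero_in_cone[OF assms(1)] by blast
qed

lemma cone_outside_quad4:
  assumes "\<sigma> \<in> \<Sigma>" "\<not> \<sigma> \<subseteq> quad4"
  shows "\<sigma> \<in> outer_cones"
proof -
  obtain s1 s2 :: real where s: "s1 \<in> {1, -1}" "s2 \<in> {1, -1}"
    and \<sigma>: "\<sigma> \<subseteq> {x. 0 \<le> s1 * fst x \<and> 0 \<le> s2 * snd x}"
    using cone_in_closed_quadrant[OF assms(1)] unfolding in_closed_quadrant_def by blast
  moreover have "\<not> (s1 = 1 \<and> s2 = -1)"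
    using \<sigma> assms(2) by (auto simp: quad4_def)
  ultimately consider "\<sigma> \<subseteq> cone_gen {(1, 0), (0, 1)}" | "\<sigma> \<subseteq> cone_gen {(-1, 0), (0, 1)}"
    | "\<sigma> \<subseteq> cone_gen {(-1, 0), (0, -1)}"
    by (auto simp: cone_gen_axes[of 1 1] cone_gen_axes[of "-1" 1] cone_gen_axes[of "-1" "-1"])
  then show ?thesis
  proof cases
    case 1
    show ?thesis
      by (rule cone_in_quadrant[OF assms(1) 1 quadrants_in_fan(1)])
        (simp add: ldet_def, simp_all add: outer_cones_def)
  next
    case 2
    show ?thesis
      by (rule cone_in_quadrant[OF assms(1) 2 quadrants_in_fan(2)])
        (simp add: ldet_def, simp_all add: outer_cones_def)
  next
    case 3
    show ?thesis
      by (rule cone_in_quadrant[OF assms(1) 3 quadrants_in_fan(3)])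
        (simp add: ldet_def, simp_all add: outer_cones_def)
  qed
qed

lemma fan_eq_chain_fan: "\<Sigma> = chain_fan (quad4_rays \<Sigma>)"
proof
  show "\<Sigma> \<subseteq> chain_fan (quad4_rays \<Sigma>)"
  proof
    fix \<sigma>
    assume "\<sigma> \<in> \<Sigma>"
    show "\<sigma> \<in> chain_fan (quad4_rays \<Sigma>)"
    proof (cases "\<sigma> \<subseteq> quad4")
      case True
      have "cone_gen {} \<in> chain_fan (quad4_rays \<Sigma>)"
        by (simp add: chain_fan_def outer_cones_def)
      then show ?thesis
        using cone_in_quad4_cases[OF \<open>\<sigma> \<in> \<Sigma>\<close> True] unfolding chain_fan_def by blast
    next
      case False
      then show ?thesis
        using cone_outside_quad4[OF \<open>\<sigma> \<in> \<Sigma>\<close>] unfolding chain_fan_def by blast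
    qed
  qed
  have "cone_gen {(1, 0)} \<in> \<Sigma>" "cone_gen {(0, 1)} \<in> \<Sigma>" "cone_gen {(-1, 0)} \<in> \<Sigma>"
    "cone_gen {(0, -1)} \<in> \<Sigma>" "cone_gen {} \<in> \<Sigma>"
    using cone_gen_faces_in_fan[OF quadrants_in_fan(1)] cone_gen_faces_in_fan[OF quadrants_in_fan(3)]
    by (simp_all add: ldet_def)
  then have "outer_cones \<subseteq> \<Sigma>"
    using quadrants_in_fan unfolding outer_cones_def by blast
  moreover have "(\<lambda>w. cone_gen {w}) ` quad4_rays \<Sigma> \<subseteq> \<Sigma>"
    by (auto simp: quad4_rays_def)
  moreover have "{cone_gen {x, y} | x y. adjacent lattice_angle (quad4_rays \<Sigma>) x y} \<subseteq> \<Sigma>"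
    using adjacent_cone_in_fan(1) by blast
  ultimately show "chain_fan (quad4_rays \<Sigma>) \<subseteq> \<Sigma>"
    unfolding chain_fan_def by blast
qed

end

theorem proposition2p10:
  assumes "\<Sigma> \<in> cFan_sc"
  shows "subdivision_step\<^sup>*\<^sup>* Sigma0000 \<Sigma>"
proof -
  interpret sc_fan \<Sigma>
    using assms by unfold_locales
  show ?thesis
    using chain_fan_reachable[OF unimodular_chain_quad4_rays] fan_eq_chain_fan by simp
qed

end
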